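(* Let $B$ be a Lie algebra over a field $k$ satisfying the axioms $\Phi1$: $\forall x_1,x_2,x_3,x_4\ (x_1x_2)(x_3x_4)=0$ and $\Phi2$: $\forall x\forall y\ (xyx=0\wedge xyy=0\to xy=0)$. Then $B$ is metabelian, and $\mathrm{Fit}(B)$ as well as every nilpotent subalgebra of $B$ is abelian.
   Context: Products are left-normed: $xyx=(xy)x$. $\mathrm{Fit}(B)$, the Fitting radical of $B$, is the sum of all nilpotent ideals of $B$. *)

theory Defs
  imports "HOL.Vector_Spaces"
begin

text \<open>Products are written br x y (= xy); left-normed: xyz = br (br x y) z.\<close>

definition lie_algebra :: "('k::field \<Rightarrow> 'b::ab_group_add \<Rightarrow> 'b) \<Rightarrow> ('b \<Rightarrow> 'b \<Rightarrow> 'b) \<Rightarrow> bool" where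
  "lie_algebra s br \<longleftrightarrow> vector_space s
     \<and> (\<forall>x y z. br (x + y) z = br x z + br y z)
     \<and> (\<forall>x y z. br x (y + z) = br x y + br x z)
     \<and> (\<forall>a x y. br (s a x) y = s a (br x y))
     \<and> (\<forall>a x y. br x (s a y) = s a (br x y))
     \<and> (\<forall>x. br x x = 0)
     \<and> (\<forall>x y z. br (br x y) z + br (br y z) x + br (br z x) y = 0)"

definition prod_span :: "('k::field \<Rightarrow> 'b::ab_group_add \<Rightarrow> 'b) \<Rightarrow> ('b \<Rightarrow> 'b \<Rightarrow> 'b) \<Rightarrow> 'b set \<Rightarrow> 'b set \<Rightarrow> 'b set" where
  "prod_span s br A C = module.span s {br a c | a c. a \<in> A \<and> c \<in> C}"

text \<open>Lower central series of a subalgebra S: S^1 = S, S^(n+1) = S^n S (index shifted by one).\<close>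
fun lower_central :: "('k::field \<Rightarrow> 'b::ab_group_add \<Rightarrow> 'b) \<Rightarrow> ('b \<Rightarrow> 'b \<Rightarrow> 'b) \<Rightarrow> 'b set \<Rightarrow> nat \<Rightarrow> 'b set" where
  "lower_central s br S 0 = S"
| "lower_central s br S (Suc n) = prod_span s br (lower_central s br S n) S"

definition lie_subalgebra :: "('k::field \<Rightarrow> 'b::ab_group_add \<Rightarrow> 'b) \<Rightarrow> ('b \<Rightarrow> 'b \<Rightarrow> 'b) \<Rightarrow> 'b set \<Rightarrow> bool" where
  "lie_subalgebra s br S \<longleftrightarrow> module.subspace s S \<and> (\<forall>x\<in>S. \<forall>y\<in>S. br x y \<in> S)"

definition lie_ideal :: "('k::field \<Rightarrow> 'b::ab_group_add \<Rightarrow> 'b) \<Rightarrow> ('b \<Rightarrow> 'b \<Rightarrow> 'b) \<Rightarrow> 'b set \<Rightarrow> bool" where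
  "lie_ideal s br I \<longleftrightarrow> module.subspace s I \<and> (\<forall>x. \<forall>y\<in>I. br x y \<in> I \<and> br y x \<in> I)"

definition lie_nilpotent :: "('k::field \<Rightarrow> 'b::ab_group_add \<Rightarrow> 'b) \<Rightarrow> ('b \<Rightarrow> 'b \<Rightarrow> 'b) \<Rightarrow> 'b set \<Rightarrow> bool" where
  "lie_nilpotent s br S \<longleftrightarrow> (\<exists>n. lower_central s br S n \<subseteq> {0})"

definition lie_abelian :: "('b \<Rightarrow> 'b \<Rightarrow> 'b) \<Rightarrow> 'b::ab_group_add set \<Rightarrow> bool" where
  "lie_abelian br S \<longleftrightarrow> (\<forall>x\<in>S. \<forall>y\<in>S. br x y = 0)"

definition lie_metabelian :: "('k::field \<Rightarrow> 'b::ab_group_add \<Rightarrow> 'b) \<Rightarrow> ('b \<Rightarrow> 'b \<Rightarrow> 'b) \<Rightarrow> bool" where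
  "lie_metabelian s br \<longleftrightarrow> lie_abelian br (prod_span s br UNIV UNIV)"

definition fitting_radical :: "('k::field \<Rightarrow> 'b::ab_group_add \<Rightarrow> 'b) \<Rightarrow> ('b \<Rightarrow> 'b \<Rightarrow> 'b) \<Rightarrow> 'b set" where
  "fitting_radical s br = module.span s (\<Union>{I. lie_ideal s br I \<and> lie_nilpotent s br I})"

end

theory Submission
  imports Defs
begin

text \<open>
  Axiom \<open>\<Phi>1\<close> says exactly that the products \<open>(x\<^sub>1x\<^sub>2)(x\<^sub>3x\<^sub>4)\<close>, which span \<open>B\<^sup>2B\<^sup>2\<close>, vanish.
  For the rest only \<open>\<Phi>2\<close> matters. In a nilpotent subalgebra \<open>S\<close> with \<open>S\<^sup>n\<^sup>+\<^sup>2 = 0\<close>, take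
  \<open>y \<in> S\<^sup>n\<close>, \<open>z \<in> S\<close>: then \<open>yzy\<close> and \<open>yzz\<close> lie in \<open>S\<^sup>n\<^sup>+\<^sup>2\<close>, so \<open>\<Phi>2\<close> gives \<open>yz = 0\<close>, i.e.
  \<open>S\<^sup>n\<^sup>+\<^sup>1 = 0\<close>; descending, \<open>S\<^sup>2 = 0\<close>. For the Fitting radical, let \<open>x \<in> I\<close>, \<open>y \<in> J\<close> with
  \<open>I, J\<close> nilpotent, hence abelian, ideals. Then \<open>xy \<in> I \<inter> J\<close>, so \<open>xyx = xyy = 0\<close> and \<open>\<Phi>2\<close>
  gives \<open>xy = 0\<close>; hence the span of all such ideals is abelian.
\<close>

lemma lie_algebra_module: "lie_algebra s br \<Longrightarrow> module s"
  unfolding lie_algebra_def vector_space_def module_def by auto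

lemma lie_algebra_bilinear:
  assumes "lie_algebra s br"
  shows "br (x + y) z = br x z + br y z" "br x (y + z) = br x y + br x z"
    "br (s a x) y = s a (br x y)" "br x (s a y) = s a (br x y)"
  using assms unfolding lie_algebra_def by auto

lemma lie_bracket_zero:
  assumes "lie_algebra s br"
  shows "br 0 y = 0" "br y 0 = 0"
proof -
  have "br (0 + 0) y = br 0 y + br 0 y" "br y (0 + 0) = br y 0 + br y 0"
    using lie_algebra_bilinear[OF assms] by blast+
  then show "br 0 y = 0" "br y 0 = 0" by simp_all
qed

lemma lie_abelian_span:
  assumes L: "lie_algebra s br" and U: "lie_abelian br U"
  shows "lie_abelian br (module.span s U)"
proof -
  interpret module s using lie_algebra_module[OF L] .
  have centralizer_subspace: "subspace {y. \<forall>x\<in>V. br x y = 0}"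
    and annihilator_subspace: "subspace {x. \<forall>y\<in>V. br x y = 0}" for V
    by (auto intro!: subspaceI simp: lie_bracket_zero[OF L] lie_algebra_bilinear[OF L])
  have "span U \<subseteq> {y. \<forall>x\<in>U. br x y = 0}"
    using U by (intro span_minimal centralizer_subspace) (auto simp: lie_abelian_def)
  then have "span U \<subseteq> {x. \<forall>y\<in>span U. br x y = 0}"
    by (intro span_minimal annihilator_subspace) auto
  then show ?thesis unfolding lie_abelian_def by blast
qed

lemma lie_bracket_mem_lower_central_Suc:
  assumes L: "lie_algebra s br"
    and "y \<in> lower_central s br S n" "z \<in> S"
  shows "br y z \<in> lower_central s br S (Suc n)"
proof -
  interpret module s using lie_algebra_module[OF L] .
  show ?thesis using assms(2,3) by (auto simp: prod_span_def intro!: span_base)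
qed

lemma lower_central_subset:
  assumes L: "lie_algebra s br" and S: "lie_subalgebra s br S"
  shows "lower_central s br S n \<subseteq> S"
proof (induction n)
  case 0 then show ?case by simp
next
  case (Suc n)
  interpret module s using lie_algebra_module[OF L] .
  show ?case unfolding lower_central.simps prod_span_def
    using Suc S unfolding lie_subalgebra_def by (intro span_minimal) auto
qed

lemma lower_central_Suc_trivial:
  assumes L: "lie_algebra s br" and Z: "lower_central s br S n \<subseteq> {0}"
  shows "lower_central s br S (Suc n) \<subseteq> {0}"
proof -
  interpret module s using lie_algebra_module[OF L] .
  show ?thesis unfolding lower_central.simps prod_span_def
    using Z by (intro span_minimal) (auto simp: lie_bracket_zero[OF L])
qed

lemma lower_central_trivial_descend:
  assumes L: "lie_algebra s br" and S: "lie_subalgebra s br S"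
    and Phi2: "\<forall>x y. br (br x y) x = 0 \<and> br (br x y) y = 0 \<longrightarrow> br x y = 0"
    and Z: "lower_central s br S (Suc (Suc n)) \<subseteq> {0}"
  shows "lower_central s br S (Suc n) \<subseteq> {0}"
proof -
  interpret module s using lie_algebra_module[OF L] .
  have "br y z = 0" if y: "y \<in> lower_central s br S n" and z: "z \<in> S" for y z
  proof -
    have yz: "br y z \<in> lower_central s br S (Suc n)"
      using lie_bracket_mem_lower_central_Suc[OF L y z] .
    have "y \<in> S" using lower_central_subset[OF L S] y by blast
    then have "br (br y z) y \<in> lower_central s br S (Suc (Suc n))"
      and "br (br y z) z \<in> lower_central s br S (Suc (Suc n))"
      using lie_bracket_mem_lower_central_Suc[OF L yz] z by blast+
    then show ?thesis using Z Phi2 by blast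
  qed
  then show ?thesis unfolding lower_central.simps(2) prod_span_def
    by (intro span_minimal) auto
qed

lemma nilpotent_lower_central_1_trivial:
  assumes L: "lie_algebra s br" and S: "lie_subalgebra s br S"
    and Phi2: "\<forall>x y. br (br x y) x = 0 \<and> br (br x y) y = 0 \<longrightarrow> br x y = 0"
    and Z: "lower_central s br S n \<subseteq> {0}"
  shows "lower_central s br S 1 \<subseteq> {0}"
  using Z
proof (induction n)
  case 0
  then show ?case using lower_central_Suc_trivial[OF L, of S 0] by simp
next
  case (Suc n)
  show ?case
  proof (cases n)
    case 0
    then show ?thesis using Suc.prems by simp
  next
    case (Suc m)
    then show ?thesis
      using Suc.IH Suc.prems lower_central_trivial_descend[OF L S Phi2] by simp
  qed
qed

lemma nilpotent_subalgebra_abelian: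
  assumes L: "lie_algebra s br" and S: "lie_subalgebra s br S" and N: "lie_nilpotent s br S"
    and Phi2: "\<forall>x y. br (br x y) x = 0 \<and> br (br x y) y = 0 \<longrightarrow> br x y = 0"
  shows "lie_abelian br S"
proof -
  obtain n where "lower_central s br S n \<subseteq> {0}"
    using N unfolding lie_nilpotent_def by blast
  then have "lower_central s br S (Suc 0) \<subseteq> {0}"
    using nilpotent_lower_central_1_trivial[OF L S Phi2] by simp
  then show ?thesis
    unfolding lie_abelian_def
    using lie_bracket_mem_lower_central_Suc[OF L, where n = 0] by fastforce
qed

lemma lie_abelian_Union_abelian_ideals:
  assumes Phi2: "\<forall>x y. br (br x y) x = 0 \<and> br (br x y) y = 0 \<longrightarrow> br x y = 0"
    and ideals: "\<And>I. I \<in> \<I> \<Longrightarrow> lie_ideal s br I \<and> lie_abelian br I"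
  shows "lie_abelian br (\<Union>\<I>)"
  unfolding lie_abelian_def
proof (intro ballI)
  fix x y assume "x \<in> \<Union>\<I>" "y \<in> \<Union>\<I>"
  then obtain I J where I: "I \<in> \<I>" "x \<in> I" and J: "J \<in> \<I>" "y \<in> J" by blast
  have "br x y \<in> I" "br x y \<in> J"
    using I J ideals unfolding lie_ideal_def by blast+
  then have "br (br x y) x = 0" "br (br x y) y = 0"
    using I J ideals unfolding lie_abelian_def by blast+
  then show "br x y = 0" using Phi2 by blast
qed

theorem lemma3p1:
  fixes s :: "'k::field \<Rightarrow> 'b::ab_group_add \<Rightarrow> 'b" and br :: "'b \<Rightarrow> 'b \<Rightarrow> 'b"
  assumes "lie_algebra s br"
    and Phi1: "\<forall>x1 x2 x3 x4. br (br x1 x2) (br x3 x4) = 0"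
    and Phi2: "\<forall>x y. br (br x y) x = 0 \<and> br (br x y) y = 0 \<longrightarrow> br x y = 0"
  shows "lie_metabelian s br
    \<and> lie_abelian br (fitting_radical s br)
    \<and> (\<forall>S. lie_subalgebra s br S \<and> lie_nilpotent s br S \<longrightarrow> lie_abelian br S)"
proof (intro conjI allI impI)
  note L = assms(1)
  show "lie_metabelian s br"
    unfolding lie_metabelian_def prod_span_def
    by (rule lie_abelian_span[OF L]) (use Phi1 in \<open>auto simp: lie_abelian_def\<close>)
  have nilpotent_ideal_abelian: "lie_abelian br I"
    if "lie_ideal s br I" "lie_nilpotent s br I" for I
    using nilpotent_subalgebra_abelian[OF L _ _ Phi2] that
    unfolding lie_ideal_def lie_subalgebra_def by blast
  show "lie_abelian br (fitting_radical s br)"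
    unfolding fitting_radical_def
    by (intro lie_abelian_span[OF L] lie_abelian_Union_abelian_ideals[OF Phi2])
      (use nilpotent_ideal_abelian in blast)
  show "lie_abelian br S" if "lie_subalgebra s br S \<and> lie_nilpotent s br S" for S
    using nilpotent_subalgebra_abelian[OF L _ _ Phi2] that by blast
qed

end
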